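(* Let $n\ge 2$ and let $\mathrm{Rect}^\ast(n)=\{(a^b):ab=n,\ a,b\ge 2\}$. Then: (1) $\mathrm{Rect}^\ast(n)\cap \mathcal M_n=\varnothing$; (2) if $n$ is even and $n\ge 4$, then $\mathrm{Rect}^\ast(n)\cap \mathcal L_n=\{(n/2,n/2)\}$ and $\mathrm{Rect}^\ast(n)\cap \mathcal R_n=\{(2^{n/2})\}$; if $n=2$ or $n$ is odd, both intersections are empty; (3) $\mathrm{Rect}^\ast(n)\cap Ax_n=\{(a^a)\}$ if $n=a^2$ is a square, and $\mathrm{Rect}^\ast(n)\cap Ax_n=\varnothing$ otherwise; (4) $\mathrm{Rect}^\ast(n)\subset D_2(n)\cap L_2(n)$.
   Context: The partition graph $G_n$ has as vertices the integer partitions of $n$; two partitions are adjacent if one is obtained from the other by a single elementary unit transfer followed by reordering: decrease one part by $1$ and either increase a different part by $1$ or create a new part equal to $1$, then delete a part that became $0$ and sort in nonincreasing order (the result being different from the original). $(a^b)$ denotes $b$ parts equal to $a$. The main chain is $\mathcal M_n=\{(n-k,1^k):0\le k\le n-1\}$; the left edge is $\mathcal L_n=\{(n-k,k):1\le k\le\lfloor n/2\rfloor\}$; the right edge $\mathcal R_n$ is the set of conjugates of the partitions in $\mathcal L_n$ (conjugation = transposing the Ferrers diagram). $Ax_n$ is the set of self-conjugate partitions of $n$. $D_d(n)$ is the set of vertices of $G_n$ of degree $d$. The local simplex dimension of a vertex $v$ is $m-1$ where $m$ is the largest size of a clique of $G_n$ containing $v$; $L_r(n)$ is the set of vertices of local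 simplex dimension $r$. *)

theory Defs
  imports Main
begin

definition is_partition :: "nat \<Rightarrow> nat list \<Rightarrow> bool" where
  "is_partition n p \<longleftrightarrow> sorted_wrt (\<ge>) p \<and> 0 \<notin> set p \<and> sum_list p = n"

definition partitions :: "nat \<Rightarrow> nat list set" where
  "partitions n = {p. is_partition n p}"

definition rect_part :: "nat \<Rightarrow> nat \<Rightarrow> nat list" where
  "rect_part a b = replicate b a"

text \<open>Elementary unit transfer: decrease part i by 1; increase part j (if j < length p)
  or create a new part 1 (if j = length p); delete zero parts; sort nonincreasingly.\<close>
definition transfer :: "nat list \<Rightarrow> nat \<Rightarrow> nat \<Rightarrow> nat list" where
  "transfer p i j =
     rev (sort (filter (\<lambda>x. x \<noteq> 0)
       (if j < length p then (p[i := p ! i - 1])[j := p ! j + 1]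
        else p[i := p ! i - 1] @ [1])))"

definition one_move :: "nat list \<Rightarrow> nat list \<Rightarrow> bool" where
  "one_move p q \<longleftrightarrow>
     (\<exists>i j. i < length p \<and> j \<le> length p \<and> i \<noteq> j \<and> q = transfer p i j \<and> q \<noteq> p)"

definition adj :: "nat \<Rightarrow> nat list \<Rightarrow> nat list \<Rightarrow> bool" where
  "adj n p q \<longleftrightarrow> p \<in> partitions n \<and> q \<in> partitions n \<and> (one_move p q \<or> one_move q p)"

definition main_chain :: "nat \<Rightarrow> nat list set" where
  "main_chain n = {(n - k) # replicate k 1 | k. k \<le> n - 1}"

definition left_edge :: "nat \<Rightarrow> nat list set" where
  "left_edge n = {[n - k, k] | k. 1 \<le> k \<and> k \<le> n div 2}"

definition conj_part :: "nat list \<Rightarrow> nat list" where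
  "conj_part p = map (\<lambda>i. length (filter (\<lambda>x. i < x) p)) [0..<(if p = [] then 0 else hd p)]"

definition right_edge :: "nat \<Rightarrow> nat list set" where
  "right_edge n = conj_part ` left_edge n"

definition self_conj :: "nat \<Rightarrow> nat list set" where
  "self_conj n = {p \<in> partitions n. conj_part p = p}"

definition degree :: "nat \<Rightarrow> nat list \<Rightarrow> nat" where
  "degree n p = card {q. adj n p q}"

definition deg_set :: "nat \<Rightarrow> nat \<Rightarrow> nat list set" where
  "deg_set d n = {p \<in> partitions n. degree n p = d}"

definition is_clique :: "nat \<Rightarrow> nat list set \<Rightarrow> bool" where
  "is_clique n C \<longleftrightarrow> C \<subseteq> partitions n \<and> (\<forall>p\<in>C. \<forall>q\<in>C. p \<noteq> q \<longrightarrow> adj n p q)"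

definition max_clique_at :: "nat \<Rightarrow> nat list \<Rightarrow> nat" where
  "max_clique_at n v = Max {card C | C. is_clique n C \<and> v \<in> C}"

definition local_dim_set :: "nat \<Rightarrow> nat \<Rightarrow> nat list set" where
  "local_dim_set r n = {v \<in> partitions n. max_clique_at n v - 1 = r}"

definition rect_star :: "nat \<Rightarrow> nat list set" where
  "rect_star n = {rect_part a b | a b. a * b = n \<and> 2 \<le> a \<and> 2 \<le> b}"

end

theory Submission
  imports Defs "HOL-Library.Multiset"
begin

(* All parts of (a^b) are equal, so up to reordering a unit transfer out of it only depends on
   whether the unit lands on another part, giving (a+1, a^(b-2), a-1), or on a new part, giving
   (a^(b-1), a-1, 1). Comparing multisets shows that these two partitions are also the only ones
   with a transfer into (a^b). They are adjacent to each other, so (a^b) has degree 2 and its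
   closed neighbourhood is a triangle, the largest clique through it. The remaining claims compare
   shapes: for a, b >= 2 the partition (a^b) has no part 1, has two parts only if b = 2, and its
   conjugate is (b^a). *)

lemma sorted_desc_eq_if_mset_eq:
  fixes p q :: "'a::linorder list"
  assumes "sorted_wrt (\<ge>) p" "sorted_wrt (\<ge>) q" "mset p = mset q"
  shows "p = q"
proof -
  have "sorted (rev p)" "sorted (rev q)"
    using assms(1,2) by (simp_all add: sorted_wrt_rev)
  then have "rev p = rev q"
    by (metis assms(3) mset_rev properties_for_sort sorted_sort_id)
  then show ?thesis by simp
qed

lemma sorted_wrt_ge_replicate [simp]: "sorted_wrt (\<ge>) (replicate n (x::'a::order))"
  by (induction n) auto

lemma nth_in_mset_diff_nth:
  assumes "i < length xs" "j < length xs" "i \<noteq> j"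
  shows "xs ! j \<in># mset xs - {#xs ! i#}"
proof -
  let ?ys = "take i xs @ drop (Suc i) xs"
  have "mset xs = add_mset (xs ! i) (mset ?ys)"
    using id_take_nth_drop[OF assms(1)] by (metis mset.simps(2) mset_append union_mset_add_mset_right)
  moreover have "xs ! j \<in> set ?ys"
  proof (cases "j < i")
    case True
    then have "xs ! j = take i xs ! j" by simp
    then show ?thesis using True assms(1) by (metis Un_iff length_take min.absorb4 nth_mem set_append)
  next
    case False
    then have "xs ! j = drop (Suc i) xs ! (j - Suc i)" using assms by simp
    then show ?thesis using False assms by (metis Un_iff diff_less_mono length_drop nth_mem set_append Suc_leI nat_neq_iff)
  qed
  ultimately show ?thesis by simp
qed

lemma sorted_transfer: "sorted_wrt (\<ge>) (transfer p i j)"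
  unfolding transfer_def by (simp add: sorted_wrt_rev)

lemma mset_transfer_conv:
  "mset (transfer p i j) = filter_mset (\<lambda>x. x \<noteq> 0)
     (mset (if j < length p then (p[i := p ! i - 1])[j := p ! j + 1] else p[i := p ! i - 1] @ [1]))"
  unfolding transfer_def by (simp only: mset_rev mset_sort mset_filter)

lemma mset_transfer:
  fixes p :: "nat list"
  assumes "0 \<notin> set p" "i < length p" "j < length p" "i \<noteq> j"
  shows "mset (transfer p i j) =
    mset p - {#p ! i, p ! j#} + {#p ! j + 1#} + (if p ! i = 1 then {#} else {#p ! i - 1#})"
proof -
  define R where "R = mset p - {#p ! i, p ! j#}"
  have "p ! j \<in># mset p - {#p ! i#}"
    using nth_in_mset_diff_nth[OF assms(2-4)] .
  then have "mset ((p[i := p ! i - 1])[j := p ! j + 1]) = add_mset (p ! j + 1) (add_mset (p ! i - 1) R)"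
    using assms(2-4) unfolding R_def by (simp add: mset_update add_mset_commute)
  moreover have "0 \<notin># R"
    using assms(1) unfolding R_def by (meson in_diffD in_multiset_in_set)
  then have "filter_mset (\<lambda>x. x \<noteq> 0) R = R"
    by (auto simp: filter_mset_eq_conv intro: gr0I)
  moreover have "p ! i \<noteq> 0"
    using assms(1,2) by (metis nth_mem)
  ultimately show ?thesis
    using assms(3) unfolding R_def[symmetric] by (simp add: mset_transfer_conv)
qed

lemma mset_transfer_new_part:
  fixes p :: "nat list"
  assumes "0 \<notin> set p" "i < length p"
  shows "mset (transfer p i (length p)) =
    mset p - {#p ! i#} + {#1#} + (if p ! i = 1 then {#} else {#p ! i - 1#})"
proof -
  define R where "R = mset p - {#p ! i#}"
  have "mset (p[i := p ! i - 1] @ [1]) = add_mset 1 (add_mset (p ! i - 1) R)"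
    using assms(2) unfolding R_def by (simp add: mset_update)
  moreover have "0 \<notin># R"
    using assms(1) unfolding R_def by (meson in_diffD in_multiset_in_set)
  then have "filter_mset (\<lambda>x. x \<noteq> 0) R = R"
    by (auto simp: filter_mset_eq_conv intro: gr0I)
  moreover have "p ! i \<noteq> 0"
    using assms(1,2) by (metis nth_mem)
  ultimately show ?thesis
    unfolding R_def[symmetric] by (simp add: mset_transfer_conv)
qed

lemma adj_sym: "adj n p q \<Longrightarrow> adj n q p"
  unfolding adj_def by blast

lemma not_adj_self: "\<not> adj n p p"
  unfolding adj_def one_move_def by blast

lemma max_clique_at_eq_3:
  assumes nbrs: "{q. adj n v q} = {x, y}" and "adj n x y"
  shows "max_clique_at n v = 3"
proof -
  have nbr_iff: "adj n v q \<longleftrightarrow> q = x \<or> q = y" for q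
    using nbrs by blast
  then have adjs: "adj n v x" "adj n v y" "adj n x y"
    using assms(2) by simp_all
  then have distinct: "v \<noteq> x" "v \<noteq> y" "x \<noteq> y"
    using not_adj_self by metis+
  let ?S = "{card C | C. is_clique n C \<and> v \<in> C}"
  have "{v, x, y} \<subseteq> partitions n"
    using adjs unfolding adj_def by blast
  moreover have "\<forall>p\<in>{v, x, y}. \<forall>q\<in>{v, x, y}. p \<noteq> q \<longrightarrow> adj n p q"
    using adjs adj_sym[OF adjs(1)] adj_sym[OF adjs(2)] adj_sym[OF adjs(3)] by auto
  ultimately have "is_clique n {v, x, y}"
    unfolding is_clique_def by blast
  then have "3 \<in> ?S"
    using distinct by (intro CollectI exI[of _ "{v, x, y}"]) simp
  have bound: "k \<le> 3" if "k \<in> ?S" for k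
  proof -
    obtain C where C: "k = card C" "is_clique n C" "v \<in> C"
      using \<open>k \<in> ?S\<close> by blast
    have "C \<subseteq> {v, x, y}"
    proof
      fix q
      assume "q \<in> C"
      then have "q = v \<or> adj n v q"
        using C(2,3) unfolding is_clique_def by auto
      then show "q \<in> {v, x, y}"
        using nbr_iff by blast
    qed
    then show ?thesis
      using card_mono[of "{v, x, y}" C] distinct C(1) by simp
  qed
  then have "finite ?S"
    by (intro finite_subset[of ?S "{..3}"]) auto
  then have "Max ?S = 3"
    using bound \<open>3 \<in> ?S\<close> by (meson Max_eqI)
  then show ?thesis
    unfolding max_clique_at_def .
qed

definition rect_bump :: "nat \<Rightarrow> nat \<Rightarrow> nat list" where
  "rect_bump a b = (a + 1) # replicate (b - 2) a @ [a - 1]"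

definition rect_chip :: "nat \<Rightarrow> nat \<Rightarrow> nat list" where
  "rect_chip a b = replicate (b - 1) a @ [a - 1, 1]"

lemma sorted_rect_part: "sorted_wrt (\<ge>) (rect_part a b)"
  unfolding rect_part_def by simp

lemma sorted_rect_bump: "sorted_wrt (\<ge>) (rect_bump a b)"
  unfolding rect_bump_def by (auto simp: sorted_wrt_append)

lemma sorted_rect_chip: "2 \<le> a \<Longrightarrow> sorted_wrt (\<ge>) (rect_chip a b)"
  unfolding rect_chip_def by (auto simp: sorted_wrt_append)

lemma mset_rect_bump: "mset (rect_bump a b) = replicate_mset (b - 2) a + {#a + 1, a - 1#}"
  unfolding rect_bump_def by simp

lemma mset_rect_chip: "mset (rect_chip a b) = replicate_mset (b - 1) a + {#a - 1, 1#}"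
  unfolding rect_chip_def by simp

lemma rect_part_in_partitions: "0 < a \<Longrightarrow> rect_part a b \<in> partitions (a * b)"
  unfolding partitions_def is_partition_def using sorted_rect_part
  by (simp add: rect_part_def sum_list_replicate)

lemma rect_bump_in_partitions: "2 \<le> a \<Longrightarrow> 2 \<le> b \<Longrightarrow> rect_bump a b \<in> partitions (a * b)"
  unfolding partitions_def is_partition_def using sorted_rect_bump
  by (auto simp: rect_bump_def sum_list_replicate algebra_simps le_iff_add)

lemma rect_chip_in_partitions: "2 \<le> a \<Longrightarrow> 0 < b \<Longrightarrow> rect_chip a b \<in> partitions (a * b)"
  unfolding partitions_def is_partition_def using sorted_rect_chip
  by (auto simp: rect_chip_def sum_list_replicate algebra_simps le_iff_add gr0_conv_Suc)

lemma transfer_rect_part_inner: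
  assumes "2 \<le> a" "i < b" "j < b" "i \<noteq> j"
  shows "transfer (rect_part a b) i j = rect_bump a b"
proof (rule sorted_desc_eq_if_mset_eq[OF sorted_transfer sorted_rect_bump])
  have "mset (transfer (rect_part a b) i j) = replicate_mset b a - {#a, a#} + {#a + 1, a - 1#}"
    using assms mset_transfer[of "rect_part a b" i j] by (simp add: rect_part_def)
  also have "2 \<le> b"
    using assms(2-4) by linarith
  then obtain c where "b = c + 2"
    by (metis add.commute le_Suc_ex)
  then have "replicate_mset b a - {#a, a#} + {#a + 1, a - 1#} = mset (rect_bump a b)"
    by (simp add: mset_rect_bump)
  finally show "mset (transfer (rect_part a b) i j) = mset (rect_bump a b)" .
qed

lemma transfer_rect_part_new_part:
  assumes "2 \<le> a" "i < b"
  shows "transfer (rect_part a b) i b = rect_chip a b"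
proof (rule sorted_desc_eq_if_mset_eq[OF sorted_transfer sorted_rect_chip[OF assms(1)]])
  have "mset (transfer (rect_part a b) i b) = replicate_mset b a - {#a#} + {#1, a - 1#}"
    using assms mset_transfer_new_part[of "rect_part a b" i] by (simp add: rect_part_def)
  also obtain c where "b = c + 1"
    using assms(2) by (metis Suc_eq_plus1 less_imp_Suc_add)
  then have "replicate_mset b a - {#a#} + {#1, a - 1#} = mset (rect_chip a b)"
    by (simp add: mset_rect_chip add_mset_commute)
  finally show "mset (transfer (rect_part a b) i b) = mset (rect_chip a b)" .
qed

lemma rect_bump_ne_rect_part: "rect_bump a b \<noteq> rect_part a b"
  by (cases b) (simp_all add: rect_bump_def rect_part_def)

lemma length_rect_bump: "2 \<le> b \<Longrightarrow> length (rect_bump a b) = b"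
  by (simp add: rect_bump_def)

lemma length_rect_chip: "0 < b \<Longrightarrow> length (rect_chip a b) = b + 1"
  by (simp add: rect_chip_def)

lemma one_move_rect_part_iff:
  assumes "2 \<le> a" "2 \<le> b"
  shows "one_move (rect_part a b) q \<longleftrightarrow> q = rect_bump a b \<or> q = rect_chip a b"
proof
  assume "one_move (rect_part a b) q"
  then obtain i j where "i < b" "j \<le> b" "i \<noteq> j" "q = transfer (rect_part a b) i j"
    unfolding one_move_def rect_part_def by auto
  then show "q = rect_bump a b \<or> q = rect_chip a b"
    using assms(1) transfer_rect_part_inner transfer_rect_part_new_part
    by (metis le_neq_implies_less)
next
  have len: "length (rect_part a b) = b"
    by (simp add: rect_part_def)
  assume "q = rect_bump a b \<or> q = rect_chip a b"
  then show "one_move (rect_part a b) q"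
  proof
    assume "q = rect_bump a b"
    then show ?thesis
      using assms rect_bump_ne_rect_part transfer_rect_part_inner[of a 0 b 1] unfolding one_move_def len
      by (intro exI[of _ 0] exI[of _ 1]) simp
  next
    assume "q = rect_chip a b"
    moreover have "rect_chip a b \<noteq> rect_part a b"
      using assms(2) length_rect_chip[of b a] len by auto
    ultimately show ?thesis
      using assms transfer_rect_part_new_part[of a 0 b] unfolding one_move_def len
      by (intro exI[of _ 0] exI[of _ b]) simp
  qed
qed

lemma one_move_to_rect_part:
  assumes "2 \<le> a" "sorted_wrt (\<ge>) q" "0 \<notin> set q" "one_move q (rect_part a b)"
  shows "q = rect_bump a b \<or> q = rect_chip a b"
proof -
  obtain i j where ij: "i < length q" "j \<le> length q" "i \<noteq> j"
    and rect: "mset (transfer q i j) = replicate_mset b a"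
    using assms(4) unfolding one_move_def rect_part_def by (metis mset_replicate)
  have "j \<noteq> length q"
  proof
    assume "j = length q"
    then have "1 \<in># mset (transfer q i j)"
      using mset_transfer_new_part[OF assms(3) ij(1)] by simp
    then show False
      using rect assms(1) by (simp split: if_splits)
  qed
  then have j: "j < length q"
    using ij(2) by simp
  define R where "R = mset q - {#q ! i, q ! j#}"
  have q_eq: "mset q = R + {#q ! i, q ! j#}"
    using nth_in_mset_diff_nth[OF ij(1) j ij(3)] nth_mem_mset[OF ij(1)] unfolding R_def
    by (metis insert_subset_eq_iff single_subset_iff subset_mset.diff_add)
  have rect_eq: "replicate_mset b a = R + {#q ! j + 1#} + (if q ! i = 1 then {#} else {#q ! i - 1#})"
    using rect mset_transfer[OF assms(3) ij(1) j ij(3)] unfolding R_def by simp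
  then have only_a: "x = a" if "x \<in># R + {#q ! j + 1#} + (if q ! i = 1 then {#} else {#q ! i - 1#})" for x
    using that by (metis in_replicate_mset)
  obtain k where R: "R = replicate_mset k a"
    using only_a by (metis set_mset_subset_singletonD singleton_iff subsetI union_iff)
  have qj: "q ! j = a - 1"
    using only_a[of "q ! j + 1"] by simp
  have qi: "q ! i = a + 1" if "q ! i \<noteq> 1"
    using only_a[of "q ! i - 1"] that assms(1) by simp
  show ?thesis
  proof (cases "q ! i = 1")
    case True
    then have "mset q = mset (rect_chip a b)"
      using q_eq arg_cong[OF rect_eq, of size] unfolding R qj mset_rect_chip by simp
    then show ?thesis
      using sorted_desc_eq_if_mset_eq[OF assms(2) sorted_rect_chip[OF assms(1)]] by simp
  next
    case False
    then have "mset q = mset (rect_bump a b)"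
      using q_eq arg_cong[OF rect_eq, of size] unfolding R qj qi[OF False] mset_rect_bump by simp
    then show ?thesis
      using sorted_desc_eq_if_mset_eq[OF assms(2) sorted_rect_bump] by simp
  qed
qed

lemma one_move_rect_bump_rect_chip:
  assumes "2 \<le> a" "2 \<le> b"
  shows "one_move (rect_bump a b) (rect_chip a b)"
proof -
  have len: "length (rect_bump a b) = b"
    using assms(2) by (rule length_rect_bump)
  obtain c where "b = c + 2"
    using assms(2) by (metis add.commute le_Suc_ex)
  then have "mset (transfer (rect_bump a b) 0 b) = mset (rect_chip a b)"
    using assms mset_transfer_new_part[of "rect_bump a b" 0] unfolding len
    by (simp add: rect_bump_def mset_rect_chip add_mset_commute)
  then have "transfer (rect_bump a b) 0 b = rect_chip a b"
    using sorted_desc_eq_if_mset_eq sorted_transfer sorted_rect_chip[OF assms(1)] by blast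
  moreover have "rect_chip a b \<noteq> rect_bump a b"
    using assms(2) length_rect_chip[of b a] len by auto
  ultimately show ?thesis
    using assms(2) unfolding one_move_def len by (intro exI[of _ 0] exI[of _ b]) simp
qed

lemma adj_rect_part_iff:
  assumes "2 \<le> a" "2 \<le> b"
  shows "adj (a * b) (rect_part a b) q \<longleftrightarrow> q = rect_bump a b \<or> q = rect_chip a b"
proof
  assume "adj (a * b) (rect_part a b) q"
  then have "q \<in> partitions (a * b)" "one_move (rect_part a b) q \<or> one_move q (rect_part a b)"
    unfolding adj_def by auto
  then show "q = rect_bump a b \<or> q = rect_chip a b"
    using assms one_move_rect_part_iff one_move_to_rect_part
    unfolding partitions_def is_partition_def by blast
next
  assume "q = rect_bump a b \<or> q = rect_chip a b"
  then show "adj (a * b) (rect_part a b) q"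
    using assms one_move_rect_part_iff rect_part_in_partitions rect_bump_in_partitions rect_chip_in_partitions
    unfolding adj_def by auto
qed

lemma conj_part_rect_part:
  assumes "0 < b"
  shows "conj_part (rect_part a b) = rect_part b a"
proof -
  have "conj_part (rect_part a b) = map (\<lambda>i. length (filter (\<lambda>x. i < x) (replicate b a))) [0..<a]"
    using assms unfolding conj_part_def rect_part_def by (simp add: hd_replicate)
  also have "\<dots> = map (\<lambda>i. b) [0..<a]"
    by (rule map_cong) auto
  finally show ?thesis
    by (simp add: map_replicate_const rect_part_def)
qed

lemma conj_part_two_parts:
  assumes "y \<le> x" "0 < y"
  shows "conj_part [x, y] = replicate y 2 @ replicate (x - y) 1"
proof -
  let ?f = "\<lambda>i. length (filter (\<lambda>z. i < z) [x, y])"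
  have "[0..<x] = [0..<y] @ [y..<x]"
    using assms(1) by (metis le_add_diff_inverse upt_add_eq_append zero_le)
  moreover have "map ?f [0..<y] = map (\<lambda>i. 2) [0..<y]"
    using assms(1) by (intro map_cong) auto
  moreover have "map ?f [y..<x] = map (\<lambda>i. 1) [y..<x]"
    by (intro map_cong) auto
  ultimately show ?thesis
    unfolding conj_part_def by (simp add: map_replicate_const)
qed

lemma rect_star_inter_main_chain: "rect_star n \<inter> main_chain n = {}"
proof -
  have "rect_part a b \<noteq> m # replicate k 1" if "2 \<le> a" "2 \<le> b" for a b m k
  proof
    assume eq: "rect_part a b = m # replicate k 1"
    then have "k = b - 1"
      by (metis diff_Suc_1 length_Cons length_replicate rect_part_def)
    then have "(m # replicate k 1) ! 1 = 1"
      using that(2) by simp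
    moreover have "rect_part a b ! 1 = a"
      using that(2) by (simp add: rect_part_def)
    ultimately show False
      using eq that(1) by simp
  qed
  then show ?thesis
    unfolding rect_star_def main_chain_def by blast
qed

lemma rect_part_eq_two_parts:
  assumes "rect_part a b = [x, y]"
  shows "b = 2 \<and> a = x \<and> a = y"
proof -
  have "b = 2"
    using arg_cong[OF assms, of length] by (simp add: rect_part_def)
  then show ?thesis
    using assms by (simp add: rect_part_def numeral_2_eq_2)
qed

lemma rect_star_inter_left_edge:
  "rect_star n \<inter> left_edge n = (if even n \<and> 4 \<le> n then {[n div 2, n div 2]} else {})"
proof (intro equalityI subsetI)
  fix p
  assume "p \<in> rect_star n \<inter> left_edge n"
  then obtain a b k where "p = rect_part a b" "a * b = n" "2 \<le> a" "p = [n - k, k]"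
    unfolding rect_star_def left_edge_def by blast
  moreover from this have "b = 2 \<and> a = n - k \<and> a = k"
    using rect_part_eq_two_parts by metis
  ultimately show "p \<in> (if even n \<and> 4 \<le> n then {[n div 2, n div 2]} else {})"
    by auto
next
  fix p
  assume "p \<in> (if even n \<and> 4 \<le> n then {[n div 2, n div 2]} else {})"
  then have n: "even n" "4 \<le> n" and p: "p = [n - n div 2, n div 2]"
    by (auto split: if_splits)
  have half: "n - n div 2 = n div 2" "n div 2 * 2 = n" "2 \<le> n div 2"
    using n by auto
  then have "p = rect_part (n div 2) 2"
    using p by (simp add: rect_part_def numeral_2_eq_2)
  then show "p \<in> rect_star n \<inter> left_edge n"
    using p half unfolding rect_star_def left_edge_def by fastforce
qed

lemma rect_part_eq_twos_ones:
  assumes "rect_part a b = replicate k 2 @ replicate m 1" "0 < k" "2 \<le> a"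
  shows "a = 2 \<and> b = k \<and> m = 0"
proof -
  have "set (rect_part a b) \<subseteq> {a}"
    by (auto simp: rect_part_def)
  then have "set (replicate k 2 @ replicate m 1) \<subseteq> {a}"
    unfolding assms(1) .
  then have "a = 2" "m = 0"
    using assms(2,3) by auto
  moreover have "b = k + m"
    using arg_cong[OF assms(1), of length] by (simp add: rect_part_def)
  ultimately show ?thesis
    by simp
qed

lemma rect_star_inter_right_edge:
  "rect_star n \<inter> right_edge n = (if even n \<and> 4 \<le> n then {rect_part 2 (n div 2)} else {})"
proof (intro equalityI subsetI)
  fix p
  assume "p \<in> rect_star n \<inter> right_edge n"
  then obtain a b k where p: "p = rect_part a b" "a * b = n" "2 \<le> a" "2 \<le> b"
    and conj: "p = conj_part [n - k, k]" "1 \<le> k" "k \<le> n div 2"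
    unfolding rect_star_def right_edge_def left_edge_def by blast
  then have "rect_part a b = replicate k 2 @ replicate (n - k - k) 1"
    using conj_part_two_parts[of k "n - k"] by simp
  from rect_part_eq_twos_ones[OF this _ p(3)] conj(2) have "a = 2" "b = k" "n - k - k = 0"
    by simp_all
  then show "p \<in> (if even n \<and> 4 \<le> n then {rect_part 2 (n div 2)} else {})"
    using p conj by auto
next
  fix p
  assume "p \<in> (if even n \<and> 4 \<le> n then {rect_part 2 (n div 2)} else {})"
  then have n: "even n" "4 \<le> n" and p: "p = rect_part 2 (n div 2)"
    by (auto split: if_splits)
  have half: "n - n div 2 = n div 2" "2 * (n div 2) = n" "2 \<le> n div 2"
    using n by auto
  then have "p = conj_part [n - n div 2, n div 2]"
    using p conj_part_rect_part[of 2 "n div 2"] by (simp add: rect_part_def numeral_2_eq_2)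
  then show "p \<in> rect_star n \<inter> right_edge n"
    using p half unfolding rect_star_def right_edge_def left_edge_def by fastforce
qed

lemma rect_star_inter_self_conj:
  "rect_star n \<inter> self_conj n = {rect_part a a | a. 2 \<le> a \<and> n = a\<^sup>2}"
proof (intro equalityI subsetI)
  fix p
  assume "p \<in> rect_star n \<inter> self_conj n"
  then obtain a b where p: "p = rect_part a b" "a * b = n" "2 \<le> a" "2 \<le> b" "conj_part p = p"
    unfolding rect_star_def self_conj_def by blast
  then have "rect_part b a = rect_part a b"
    using conj_part_rect_part[of b a] by simp
  then have "a = b"
    using arg_cong[of _ _ length] by (force simp: rect_part_def)
  then show "p \<in> {rect_part a a | a. 2 \<le> a \<and> n = a\<^sup>2}"
    using p by (auto simp: power2_eq_square)
next
  fix p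
  assume "p \<in> {rect_part a a | a. 2 \<le> a \<and> n = a\<^sup>2}"
  then obtain a where p: "p = rect_part a a" "2 \<le> a" "n = a * a"
    by (auto simp: power2_eq_square)
  then have "p \<in> partitions n" "conj_part p = p"
    using rect_part_in_partitions conj_part_rect_part by simp_all
  then show "p \<in> rect_star n \<inter> self_conj n"
    using p unfolding rect_star_def self_conj_def by blast
qed

lemma rect_star_subset_deg_set_local_dim_set:
  "rect_star n \<subseteq> deg_set 2 n \<inter> local_dim_set 2 n"
proof
  fix p
  assume "p \<in> rect_star n"
  then obtain a b where p: "p = rect_part a b" "n = a * b" and ab: "2 \<le> a" "2 \<le> b"
    unfolding rect_star_def by auto
  have nbrs: "{q. adj n p q} = {rect_bump a b, rect_chip a b}"
    using adj_rect_part_iff[OF ab] p by auto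
  have "rect_bump a b \<noteq> rect_chip a b"
    using ab length_rect_bump[of b a] length_rect_chip[of b a] by auto
  then have "degree n p = 2"
    unfolding degree_def nbrs by simp
  moreover have "adj n (rect_bump a b) (rect_chip a b)"
    using nbrs one_move_rect_bump_rect_chip[OF ab] unfolding adj_def by blast
  then have "max_clique_at n p = 3"
    using max_clique_at_eq_3[OF nbrs] by simp
  moreover have "p \<in> partitions n"
    using p ab rect_part_in_partitions by simp
  ultimately show "p \<in> deg_set 2 n \<inter> local_dim_set 2 n"
    unfolding deg_set_def local_dim_set_def by simp
qed

theorem proposition3p9:
  fixes n :: nat
  assumes "n \<ge> 2"
  shows "rect_star n \<inter> main_chain n = {} \<and>
         (even n \<and> n \<ge> 4 \<longrightarrow>
           rect_star n \<inter> left_edge n = {[n div 2, n div 2]} \<and>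
           rect_star n \<inter> right_edge n = {rect_part 2 (n div 2)}) \<and>
         (n = 2 \<or> odd n \<longrightarrow>
           rect_star n \<inter> left_edge n = {} \<and> rect_star n \<inter> right_edge n = {}) \<and>
         (\<forall>a. n = a ^ 2 \<longrightarrow> rect_star n \<inter> self_conj n = {rect_part a a}) \<and>
         ((\<nexists>a. n = a ^ 2) \<longrightarrow> rect_star n \<inter> self_conj n = {}) \<and>
         rect_star n \<subseteq> deg_set 2 n \<inter> local_dim_set 2 n"
proof -
  have square: "rect_star n \<inter> self_conj n = {rect_part a a}" if "n = a\<^sup>2" for a
  proof -
    have "\<not> a \<le> 1"
      using assms that power_le_one[of a 2] by auto
    then have "2 \<le> a"
      by simp
    then show ?thesis
      using that unfolding rect_star_inter_self_conj by auto
  qed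
  have nonsquare: "rect_star n \<inter> self_conj n = {}" if "\<nexists>a. n = a\<^sup>2"
    using that unfolding rect_star_inter_self_conj by auto
  show ?thesis
    using rect_star_inter_main_chain rect_star_inter_left_edge rect_star_inter_right_edge
      square nonsquare rect_star_subset_deg_set_local_dim_set assms by auto
qed

end
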